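(* Let $G$ be a non-trivial abelian group (written additively) and $\varphi$ an automorphism of $G$. Let $G_\varphi$ be the set $G$ with the operation $g\rhd h=\varphi(g)+(\mathrm{id}-\varphi)(h)$. Then the following are equivalent: (i) $G_\varphi$ is finitely stable; (ii) $\varphi$ is a torsion element of the automorphism group $Aut(G)$.
   Context: For a rack $X$ and $u_1,\ldots,u_n\in X$, write $x\rhd(u_i)_{i=1}^n:=(\cdots((x\rhd u_1)\rhd u_2)\cdots)\rhd u_n$. A stabilizing family of order $n$ is a family $(u_1,\ldots,u_n)$ of elements of $X$ with $x\rhd(u_i)_{i=1}^n=x$ for all $x\in X$; $X$ is finitely stable if it has a stabilizing family of some order $n\ge 1$. *)

theory Defs
  imports Main
begin

definition rack_iter :: "('a \<Rightarrow> 'a \<Rightarrow> 'a) \<Rightarrow> 'a \<Rightarrow> 'a list \<Rightarrow> 'a" where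
  "rack_iter op x us = foldl op x us"

definition stabilizing_family :: "'a set \<Rightarrow> ('a \<Rightarrow> 'a \<Rightarrow> 'a) \<Rightarrow> 'a list \<Rightarrow> bool" where
  "stabilizing_family X op us \<longleftrightarrow> set us \<subseteq> X \<and> (\<forall>x\<in>X. rack_iter op x us = x)"

definition finitely_stable :: "'a set \<Rightarrow> ('a \<Rightarrow> 'a \<Rightarrow> 'a) \<Rightarrow> bool" where
  "finitely_stable X op \<longleftrightarrow> (\<exists>us. length us \<ge> 1 \<and> stabilizing_family X op us)"

definition group_automorphism :: "('a::ab_group_add \<Rightarrow> 'a) \<Rightarrow> bool" where
  "group_automorphism \<phi> \<longleftrightarrow> bij \<phi> \<and> (\<forall>x y. \<phi> (x + y) = \<phi> x + \<phi> y)"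

definition alex_op :: "('a::ab_group_add \<Rightarrow> 'a) \<Rightarrow> 'a \<Rightarrow> 'a \<Rightarrow> 'a" where
  "alex_op \<phi> g h = \<phi> g + (h - \<phi> h)"

definition torsion_automorphism :: "('a::ab_group_add \<Rightarrow> 'a) \<Rightarrow> bool" where
  "torsion_automorphism \<phi> \<longleftrightarrow> (\<exists>n::nat. n \<ge> 1 \<and> (\<phi> ^^ n) = id)"

end

theory Submission
  imports Defs
begin

text \<open>For additive \<open>\<phi>\<close> the map \<open>x \<mapsto> x \<rhd> u\<close> is affine with linear part \<open>\<phi>\<close>, so acting by a
  family of length \<open>n\<close> is \<open>x \<mapsto> \<phi>\<^sup>n x + c\<close> with \<open>c\<close> the image of \<open>0\<close>. Such a map is the identity
  exactly when \<open>\<phi>\<^sup>n = id\<close> and \<open>c = 0\<close>; the constant family \<open>0, \<dots>, 0\<close> always gives \<open>c = 0\<close>.\<close>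

lemma rack_iter_alex_op:
  fixes \<phi> :: "'a::ab_group_add \<Rightarrow> 'a"
  assumes additive: "\<And>x y. \<phi> (x + y) = \<phi> x + \<phi> y"
  shows "rack_iter (alex_op \<phi>) x us = (\<phi> ^^ length us) x + rack_iter (alex_op \<phi>) 0 us"
proof (induction us rule: rev_induct)
  case Nil
  then show ?case by (simp add: rack_iter_def)
next
  case (snoc u us)
  then show ?case by (simp add: rack_iter_def alex_op_def additive algebra_simps)
qed

lemma rack_iter_alex_op_zero_replicate:
  "rack_iter (alex_op \<phi>) 0 (replicate n 0) = (0::'a::ab_group_add)"
  by (induction n) (simp_all add: rack_iter_def alex_op_def)

lemma stabilizing_family_alex_op_iff:
  fixes \<phi> :: "'a::ab_group_add \<Rightarrow> 'a"
  assumes additive: "\<And>x y. \<phi> (x + y) = \<phi> x + \<phi> y"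
  shows "stabilizing_family UNIV (alex_op \<phi>) us \<longleftrightarrow>
           \<phi> ^^ length us = id \<and> rack_iter (alex_op \<phi>) 0 us = 0"
proof -
  let ?c = "rack_iter (alex_op \<phi>) 0 us"
  \<comment> \<open>only used instantiated: as a rewrite rule it would loop on \<open>?c\<close>\<close>
  have iter: "rack_iter (alex_op \<phi>) x us = (\<phi> ^^ length us) x + ?c" for x
    by (rule rack_iter_alex_op[of \<phi>, OF additive])
  show ?thesis
  proof
    assume "stabilizing_family UNIV (alex_op \<phi>) us"
    then have fixed: "rack_iter (alex_op \<phi>) x us = x" for x
      by (simp add: stabilizing_family_def)
    then have "?c = 0" .
    moreover have "(\<phi> ^^ length us) x = x" for x
      using iter[of x] fixed[of x] \<open>?c = 0\<close> by simp
    ultimately show "\<phi> ^^ length us = id \<and> ?c = 0"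
      by auto
  next
    assume "\<phi> ^^ length us = id \<and> ?c = 0"
    then have "rack_iter (alex_op \<phi>) x us = x" for x
      using iter[of x] by simp
    then show "stabilizing_family UNIV (alex_op \<phi>) us"
      by (simp add: stabilizing_family_def)
  qed
qed

lemma finitely_stable_alex_op_iff_torsion:
  fixes \<phi> :: "'a::ab_group_add \<Rightarrow> 'a"
  assumes additive: "\<And>x y. \<phi> (x + y) = \<phi> x + \<phi> y"
  shows "finitely_stable UNIV (alex_op \<phi>) \<longleftrightarrow> torsion_automorphism \<phi>"
proof
  assume "finitely_stable UNIV (alex_op \<phi>)"
  then obtain us where "length us \<ge> 1" "stabilizing_family UNIV (alex_op \<phi>) us"
    unfolding finitely_stable_def by blast
  moreover from this(2) have "\<phi> ^^ length us = id"
    using stabilizing_family_alex_op_iff[of \<phi>, OF additive] by blast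
  ultimately show "torsion_automorphism \<phi>"
    unfolding torsion_automorphism_def by blast
next
  assume "torsion_automorphism \<phi>"
  then obtain n where "n \<ge> 1" "\<phi> ^^ n = id"
    unfolding torsion_automorphism_def by blast
  then have "stabilizing_family UNIV (alex_op \<phi>) (replicate n 0)"
    by (simp add: stabilizing_family_alex_op_iff[of \<phi>, OF additive]
        rack_iter_alex_op_zero_replicate)
  with \<open>n \<ge> 1\<close> show "finitely_stable UNIV (alex_op \<phi>)"
    unfolding finitely_stable_def by (intro exI[of _ "replicate n 0"]) simp
qed

theorem mainTheorem6:
  fixes \<phi> :: "'a::ab_group_add \<Rightarrow> 'a"
  assumes "\<exists>g::'a. g \<noteq> 0"
    and "group_automorphism \<phi>"
  shows "finitely_stable UNIV (alex_op \<phi>) \<longleftrightarrow> torsion_automorphism \<phi>"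
proof -
  have "\<And>x y. \<phi> (x + y) = \<phi> x + \<phi> y"
    using assms(2) by (simp add: group_automorphism_def)
  then show ?thesis
    by (rule finitely_stable_alex_op_iff_torsion[of \<phi>])
qed

end
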